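(* Let $G$ be a connected orientable ribbon graph with flags and $G^\ast$ its dual. Under the natural bijection between the edges of $G$ and of $G^\ast$, $$\Xi_G(\alpha,\beta,w)=\Xi_{G^\ast}(\beta,\alpha,w).$$
   Context: Orientable ribbon graph with flags: finite graph with distinctly labelled flags at the vertices and a cyclic order of half-edges and flags at each vertex, viewed as an oriented surface with boundary. For $A\subseteq E$, each boundary component of the spanning ribbon subgraph $(V,A)$, traversed with the induced orientation, meets flags in a cyclically ordered sequence $I$; variables $w_I$ are attached to all cyclically ordered subsets of flag labels (including the empty one). $\Xi_G(\alpha,\beta,w)=\sum_{A\subseteq E}\prod_{e\notin A}\alpha_e\prod_{e\in A}\beta_e\prod_{\text{boundary comps of }(V,A)}w_I$. The dual $G^\ast$: its vertices are the boundary components (faces) of $G$, each edge of $G$ gives one edge of $G^\ast$ joining the faces on its two sides, and the half-edges and flags (each flag of $G$ lying on exactly one face) are attached to the vertex of $G^\ast$ in the cyclic order in which they are met along the boundary of $G$ with its induced orientation. *)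

theory Defs
  imports Main "HOL-Combinatorics.Permutations"
begin

text \<open>Orientable ribbon graphs with flags as combinatorial maps.
  Darts = half-edges and flags.  V: vertices; at d: vertex of dart d;
  rot: successor in the cyclic order at a vertex; iota: involution pairing the
  two half-edges of each edge and fixing exactly the flags; lab: labels of flags.\<close>

definition ribbon_graph ::
  "'v set \<Rightarrow> 'd set \<Rightarrow> ('d \<Rightarrow> 'v) \<Rightarrow> ('d \<Rightarrow> 'd) \<Rightarrow> ('d \<Rightarrow> 'd) \<Rightarrow> ('d \<Rightarrow> 'l) \<Rightarrow> bool" where
  "ribbon_graph V D at rot iota lab \<longleftrightarrow>
     finite V \<and> finite D \<and> at ` D \<subseteq> V \<and>
     rot permutes D \<and> (\<forall>d\<in>D. at (rot d) = at d) \<and>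
     (\<forall>d\<in>D. \<forall>d'\<in>D. at d = at d' \<longrightarrow> (\<exists>n. (rot ^^ n) d = d')) \<and>
     iota permutes D \<and> (\<forall>d. iota (iota d) = d) \<and>
     inj_on lab {d\<in>D. iota d = d}"

definition flags :: "'d set \<Rightarrow> ('d \<Rightarrow> 'd) \<Rightarrow> 'd set" where
  "flags D iota = {d\<in>D. iota d = d}"

definition edges :: "'d set \<Rightarrow> ('d \<Rightarrow> 'd) \<Rightarrow> 'd set set" where
  "edges D iota = {{d, iota d} | d. d \<in> D \<and> iota d \<noteq> d}"

definition rg_connected :: "'v set \<Rightarrow> 'd set \<Rightarrow> ('d \<Rightarrow> 'v) \<Rightarrow> ('d \<Rightarrow> 'd) \<Rightarrow> bool" where
  "rg_connected V D at iota \<longleftrightarrow>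
     (\<forall>v\<in>V. \<forall>u\<in>V. (\<lambda>x y. \<exists>d\<in>D. at d = x \<and> at (iota d) = y)\<^sup>*\<^sup>* v u)"

text \<open>Involution restricted to the edges in A (spanning subgraph (V,A)).\<close>
definition part_inv :: "('d \<Rightarrow> 'd) \<Rightarrow> 'd set set \<Rightarrow> 'd \<Rightarrow> 'd" where
  "part_inv iota A d = (if {d, iota d} \<in> A then iota d else d)"

text \<open>Boundary permutation of the spanning ribbon subgraph (V,A).\<close>
definition face_perm :: "('d \<Rightarrow> 'd) \<Rightarrow> ('d \<Rightarrow> 'd) \<Rightarrow> 'd set set \<Rightarrow> 'd \<Rightarrow> 'd" where
  "face_perm rot iota A = rot \<circ> part_inv iota A"

definition orb :: "('d \<Rightarrow> 'd) \<Rightarrow> 'd \<Rightarrow> 'd set" where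
  "orb f d = {(f ^^ n) d | n. True}"

definition period :: "('d \<Rightarrow> 'd) \<Rightarrow> 'd \<Rightarrow> nat" where
  "period f d = (LEAST n. 0 < n \<and> (f ^^ n) d = d)"

definition orb_list :: "('d \<Rightarrow> 'd) \<Rightarrow> 'd \<Rightarrow> 'd list" where
  "orb_list f d = map (\<lambda>i. (f ^^ i) d) [0..<period f d]"

definition cyc :: "'l list \<Rightarrow> 'l list set" where
  "cyc xs = {rotate n xs | n. True}"

text \<open>Cyclically ordered flag labels met along the boundary component C.\<close>
definition bseq :: "('d \<Rightarrow> 'd) \<Rightarrow> ('d \<Rightarrow> 'd) \<Rightarrow> ('d \<Rightarrow> 'l) \<Rightarrow> 'd set set \<Rightarrow> 'd set \<Rightarrow> 'l list set" where
  "bseq rot iota lab A C =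
     cyc (map lab (filter (\<lambda>d. iota d = d) (orb_list (face_perm rot iota A) (SOME d. d \<in> C))))"

text \<open>Weight of the boundary components of (V,A): one factor per cycle of the
  boundary permutation on darts, and one factor w(empty) per vertex carrying
  no darts at all (its boundary circle meets no flag).\<close>
definition bweight ::
  "'v set \<Rightarrow> 'd set \<Rightarrow> ('d \<Rightarrow> 'v) \<Rightarrow> ('d \<Rightarrow> 'd) \<Rightarrow> ('d \<Rightarrow> 'd) \<Rightarrow> ('d \<Rightarrow> 'l)
    \<Rightarrow> ('l list set \<Rightarrow> 'a::comm_ring_1) \<Rightarrow> 'd set set \<Rightarrow> 'a" where
  "bweight V D at rot iota lab w A =
     (\<Prod>C\<in>{orb (face_perm rot iota A) d | d. d \<in> D}. w (bseq rot iota lab A C))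
     * w (cyc []) ^ card {v\<in>V. \<forall>d\<in>D. at d \<noteq> v}"

definition Xi ::
  "'v set \<Rightarrow> 'd set \<Rightarrow> ('d \<Rightarrow> 'v) \<Rightarrow> ('d \<Rightarrow> 'd) \<Rightarrow> ('d \<Rightarrow> 'd) \<Rightarrow> ('d \<Rightarrow> 'l)
    \<Rightarrow> ('d set \<Rightarrow> 'a::comm_ring_1) \<Rightarrow> ('d set \<Rightarrow> 'a) \<Rightarrow> ('l list set \<Rightarrow> 'a) \<Rightarrow> 'a" where
  "Xi V D at rot iota lab \<alpha> \<beta> w =
     (\<Sum>A\<in>Pow (edges D iota).
        (\<Prod>e\<in>edges D iota - A. \<alpha> e) * (\<Prod>e\<in>A. \<beta> e) * bweight V D at rot iota lab w A)"

text \<open>The dual: vertices are the faces of G (cycles of the full boundary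
  permutation, plus each dart-less vertex which is its own face); same darts,
  same edge involution (natural edge bijection = identity), rotation at a face
  = order in which darts are met along the boundary.\<close>
definition dual_verts :: "'v set \<Rightarrow> 'd set \<Rightarrow> ('d \<Rightarrow> 'v) \<Rightarrow> ('d \<Rightarrow> 'd) \<Rightarrow> ('d \<Rightarrow> 'd) \<Rightarrow> ('v + 'd set) set" where
  "dual_verts V D at rot iota =
     Inl ` {v\<in>V. \<forall>d\<in>D. at d \<noteq> v} \<union> Inr ` {orb (face_perm rot iota (edges D iota)) d | d. d \<in> D}"

definition dual_at :: "'d set \<Rightarrow> ('d \<Rightarrow> 'd) \<Rightarrow> ('d \<Rightarrow> 'd) \<Rightarrow> 'd \<Rightarrow> 'v + 'd set" where
  "dual_at D rot iota d = Inr (orb (face_perm rot iota (edges D iota)) d)"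

definition dual_rot :: "'d set \<Rightarrow> ('d \<Rightarrow> 'd) \<Rightarrow> ('d \<Rightarrow> 'd) \<Rightarrow> 'd \<Rightarrow> 'd" where
  "dual_rot D rot iota = face_perm rot iota (edges D iota)"

end

theory Submission
  imports Defs
begin

(* The dual G* has the same darts and the same edge involution iota as G, and
   its rotation is the face permutation rot o iota of G.  For a set A of edges
   the boundary permutation of the spanning subgraph of G* with the
   complementary edge set E - A is therefore
     (rot o iota) o part_inv (E - A) = rot o part_inv A,
   because applying iota on the edges outside A and then iota on all edges
   undoes the first step exactly outside A.  Hence the spanning subgraph (V,A)
   of G and the spanning subgraph (V*, E - A) of G* have the same boundary
   components with the same flag sequences, and also the same dart-less
   vertices.  The theorem follows by reindexing the state sum along the
   complementation bijection A |-> E - A on subsets of E, which exchanges the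
   roles of alpha and beta. *)

lemma singleton_notin_edges: "{x} \<notin> edges D iota"
  unfolding edges_def by (auto simp: doubleton_eq_iff)

lemma part_inv_edges_complement:
  assumes "iota permutes D" and "\<forall>d. iota (iota d) = d" and "A \<subseteq> edges D iota"
  shows "part_inv iota (edges D iota) \<circ> part_inv iota (edges D iota - A) = part_inv iota A"
proof
  fix d
  show "(part_inv iota (edges D iota) \<circ> part_inv iota (edges D iota - A)) d = part_inv iota A d"
  proof (cases "iota d = d")
    case True
    then have "{d, iota d} \<notin> edges D iota"
      using singleton_notin_edges by (metis insert_absorb2)
    with True assms(3) show ?thesis by (auto simp: part_inv_def)
  next
    case False
    then have "d \<in> D"
      using assms(1) by (meson permutes_not_in)
    with False have "{d, iota d} \<in> edges D iota"
      unfolding edges_def by blast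
    with assms(2) show ?thesis
      by (cases "{d, iota d} \<in> A") (auto simp: part_inv_def insert_commute)
  qed
qed

lemma face_perm_dual_complement:
  assumes "iota permutes D" and "\<forall>d. iota (iota d) = d" and "A \<subseteq> edges D iota"
  shows "face_perm (dual_rot D rot iota) iota (edges D iota - A) = face_perm rot iota A"
  using part_inv_edges_complement[OF assms]
  by (simp add: face_perm_def dual_rot_def comp_assoc)

lemma dual_dartless_verts:
  "{v \<in> dual_verts V D at rot iota. \<forall>d\<in>D. dual_at D rot iota d \<noteq> v}
   = Inl ` {v\<in>V. \<forall>d\<in>D. at d \<noteq> v}"
  unfolding dual_verts_def dual_at_def by auto

lemma card_dual_dartless_verts:
  "card {v \<in> dual_verts V D at rot iota. \<forall>d\<in>D. dual_at D rot iota d \<noteq> v}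
   = card {v\<in>V. \<forall>d\<in>D. at d \<noteq> v}"
  unfolding dual_dartless_verts by (rule card_image) simp

lemma bweight_dual_complement:
  assumes "iota permutes D" and "\<forall>d. iota (iota d) = d" and "A \<subseteq> edges D iota"
  shows "bweight (dual_verts V D at rot iota) D (dual_at D rot iota) (dual_rot D rot iota)
           iota lab w (edges D iota - A)
         = bweight V D at rot iota lab w A"
  unfolding bweight_def bseq_def face_perm_dual_complement[OF assms] card_dual_dartless_verts ..

lemma sum_Pow_complement:
  "(\<Sum>A\<in>Pow E. f A) = (\<Sum>A\<in>Pow E. f (E - A))"
  by (rule sum.reindex_bij_witness[of _ "\<lambda>A. E - A" "\<lambda>A. E - A"])
     (auto simp: double_diff)

theorem proposition5p2:
  fixes V :: "'v set" and D :: "'d set" and at :: "'d \<Rightarrow> 'v"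
    and rot iota :: "'d \<Rightarrow> 'd" and lab :: "'d \<Rightarrow> 'l"
    and \<alpha> \<beta> :: "'d set \<Rightarrow> 'a::comm_ring_1" and w :: "'l list set \<Rightarrow> 'a"
  assumes "ribbon_graph V D at rot iota lab"
    and "rg_connected V D at iota"
  shows "Xi V D at rot iota lab \<alpha> \<beta> w =
         Xi (dual_verts V D at rot iota) D (dual_at D rot iota) (dual_rot D rot iota) iota lab \<beta> \<alpha> w"
proof -
  let ?E = "edges D iota"
  let ?bw = "bweight V D at rot iota lab w"
  let ?bw' = "bweight (dual_verts V D at rot iota) D (dual_at D rot iota) (dual_rot D rot iota) iota lab w"
  have iota: "iota permutes D" "\<forall>d. iota (iota d) = d"
    using assms(1) unfolding ribbon_graph_def by auto
  have "Xi (dual_verts V D at rot iota) D (dual_at D rot iota) (dual_rot D rot iota) iota lab \<beta> \<alpha> w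
        = (\<Sum>A\<in>Pow ?E. (\<Prod>e\<in>?E - (?E - A). \<beta> e) * prod \<alpha> (?E - A) * ?bw' (?E - A))"
    unfolding Xi_def by (rule sum_Pow_complement)
  also have "\<dots> = (\<Sum>A\<in>Pow ?E. prod \<alpha> (?E - A) * prod \<beta> A * ?bw A)"
  proof (rule sum.cong)
    fix A assume "A \<in> Pow ?E"
    then have "A \<subseteq> ?E" by simp
    then have "?E - (?E - A) = A" and "?bw' (?E - A) = ?bw A"
      using bweight_dual_complement[OF iota] by auto
    then show "(\<Prod>e\<in>?E - (?E - A). \<beta> e) * prod \<alpha> (?E - A) * ?bw' (?E - A)
               = prod \<alpha> (?E - A) * prod \<beta> A * ?bw A"
      by (simp add: mult_ac)
  qed simp
  finally show ?thesis unfolding Xi_def ..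
qed

end
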